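(* There exists an absolute constant $C>0$ such that for all $d\ge1$ and $n=2^k$, the number of elementary operations involved in computing the OMADRE predictions $\hat\theta^{OM}_{\rho(1)},\dots,\hat\theta^{OM}_{\rho(N)}$ (for any ordering $\rho$ of $L_{d,n}$ and any data) is at most $C\,N(\log_2 2n)^d$, where $N=n^d$.
   Context: $L_{d,n}=[n]^d$ with $n=2^k$, $N=n^d$. A dyadic interval is a set of integers of the form $((a-1)2^s,a2^s]\cap\mathbb Z$ with integers $0\le s\le k$, $1\le a\le 2^{k-s}$; a dyadic rectangle is a product of $d$ dyadic intervals. The expert family $\mathcal S$ is the set of all dyadic rectangles of $L_{d,n}$. The online averaging rule is $r^{(S)}_{U,s}(y_U)=\bar y_U$ (the mean of $(y_u)_{u\in U}$), with $\bar y_\emptyset=0$. OMADRE is the aggregation algorithm $\mathcal A(\mathbf r,\mathcal S,\lambda)$ with these experts and rule, defined as follows (with $K=L_{d,n}$, an ordering $\rho:[N]\to K$, $\rho[a:b]=\{\rho(a),\dots,\rho(b)\}$, expert predictions $\hat y^{(S)}_{\rho(t)}=r^{(S)}_{\rho[1:t-1]\cap S,\rho(t)}(y_{\rho[1:t-1]\cap S})$, $T_\lambda(x)=\min\{\max\{x,-\lambda\},\lambda\}$): set $\alpha=1/(8\lambda^2)$, $w_{S,1}=1/|\mathcal S|$; for $t=1,\dots,N$: $\rho(t)$ is revealed; $A_t=\{S\in\mathcal S:\rho(t)\in S,\ \rho(t')\in S\text{ for some }t'<t\}$ for $t>1$ and $A_1=\{S:\rho(1)\in S\}$; predict $\hat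 y_{\rho(t)}=\sum_{S\in A_t}\hat w_{S,t}T_\lambda(\hat y^{(S)}_{\rho(t)})$ with $\hat w_{S,t}=w_{S,t}/\sum_{S'\in A_t}w_{S',t}$; after $y_{\rho(t)}$ is revealed set $w_{S,t+1}=w_{S,t}$ for $S\notin A_t$ and $w_{S,t+1}=\frac{w_{S,t}e^{-\alpha\ell_{S,t}}}{\sum_{S'\in A_t}w_{S',t}e^{-\alpha\ell_{S',t}}}\sum_{S'\in A_t}w_{S',t}$ for $S\in A_t$, where $\ell_{S,t}=(T_\lambda(y_{\rho(t)})-T_\lambda(\hat y^{(S)}_{\rho(t)}))^2$. $\hat\theta^{OM}$ denotes the output $\hat y$. *)

theory Defs
  imports Complex_Main
begin

definition grid :: "nat \<Rightarrow> nat \<Rightarrow> nat list set" where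
  "grid d n = {x. length x = d \<and> (\<forall>i<d. 1 \<le> x ! i \<and> x ! i \<le> n)}"

definition dy_int :: "nat \<Rightarrow> nat \<Rightarrow> nat set" where
  "dy_int s a = {(a - 1) * 2 ^ s <.. a * 2 ^ s}"

text \<open>Rectangle described by a list of (level, index) pairs, one per coordinate.\<close>
definition rect_set :: "(nat \<times> nat) list \<Rightarrow> nat list set" where
  "rect_set rs = {x. length x = length rs \<and> (\<forall>i<length rs. x ! i \<in> dy_int (fst (rs ! i)) (snd (rs ! i)))}"

definition dyadic_rects :: "nat \<Rightarrow> nat \<Rightarrow> nat list set set" where
  "dyadic_rects d k = {rect_set rs | rs. length rs = d \<and>
      (\<forall>i<d. fst (rs ! i) \<le> k \<and> 1 \<le> snd (rs ! i) \<and> snd (rs ! i) \<le> 2 ^ (k - fst (rs ! i)))}"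

definition trunc :: "real \<Rightarrow> real \<Rightarrow> real" where
  "trunc lam x = min (max x (- lam)) lam"

definition prior :: "(nat \<Rightarrow> nat list) \<Rightarrow> nat \<Rightarrow> nat list set" where
  "prior \<rho> t = \<rho> ` {1..<t}"

definition mean :: "(nat list \<Rightarrow> real) \<Rightarrow> nat list set \<Rightarrow> real" where
  "mean y U = (if U = {} then 0 else (\<Sum>u\<in>U. y u) / real (card U))"

definition expert_pred :: "(nat \<Rightarrow> nat list) \<Rightarrow> (nat list \<Rightarrow> real) \<Rightarrow> nat list set \<Rightarrow> nat \<Rightarrow> real" where
  "expert_pred \<rho> y S t = mean y (prior \<rho> t \<inter> S)"

definition active :: "nat list set set \<Rightarrow> (nat \<Rightarrow> nat list) \<Rightarrow> nat \<Rightarrow> nat list set set" where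
  "active F \<rho> t = {S \<in> F. \<rho> t \<in> S \<and> (t = 1 \<or> prior \<rho> t \<inter> S \<noteq> {})}"

definition loss :: "real \<Rightarrow> (nat \<Rightarrow> nat list) \<Rightarrow> (nat list \<Rightarrow> real) \<Rightarrow> nat list set \<Rightarrow> nat \<Rightarrow> real" where
  "loss lam \<rho> y S t = (trunc lam (y (\<rho> t)) - trunc lam (expert_pred \<rho> y S t))\<^sup>2"

text \<open>omw F rho y lam t is the weight vector w_{.,t+1} (weights after processing time t).\<close>
fun omw :: "nat list set set \<Rightarrow> (nat \<Rightarrow> nat list) \<Rightarrow> (nat list \<Rightarrow> real) \<Rightarrow> real \<Rightarrow> nat \<Rightarrow> nat list set \<Rightarrow> real" where
  "omw F \<rho> y lam 0 = (\<lambda>S. 1 / real (card F))"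
| "omw F \<rho> y lam (Suc t) =
     (let w = omw F \<rho> y lam t; A = active F \<rho> (Suc t); \<alpha> = 1 / (8 * lam\<^sup>2) in
      (\<lambda>S. if S \<in> A then
              w S * exp (- \<alpha> * loss lam \<rho> y S (Suc t))
                / (\<Sum>S'\<in>A. w S' * exp (- \<alpha> * loss lam \<rho> y S' (Suc t)))
                * (\<Sum>S'\<in>A. w S')
            else w S))"

text \<open>The OMADRE prediction at time t (1-based).\<close>
definition om_pred :: "nat list set set \<Rightarrow> (nat \<Rightarrow> nat list) \<Rightarrow> (nat list \<Rightarrow> real) \<Rightarrow> real \<Rightarrow> nat \<Rightarrow> real" where
  "om_pred F \<rho> y lam t =
     (let w = omw F \<rho> y lam (t - 1); A = active F \<rho> t in
      (\<Sum>S\<in>A. w S / (\<Sum>S'\<in>A. w S') * trunc lam (expert_pred \<rho> y S t)))"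

text \<open>Cost model: unit cost for each arithmetic operation, comparison, table lookup/update
  and for enumerating one rectangle id (rectangle identifiers are single words).
  The rectangles containing x: in coordinate i the level-s dyadic interval containing
  x_i has index ceil(x_i / 2^s).\<close>
definition rects_containing :: "nat \<Rightarrow> nat list \<Rightarrow> nat list set list" where
  "rects_containing k x =
     map rect_set (product_lists (map (\<lambda>xi. map (\<lambda>s. (s, (xi + 2 ^ s - 1) div 2 ^ s)) [0..<k + 1]) x))"

type_synonym om_state = "(nat list set \<Rightarrow> real) \<times> (nat list set \<Rightarrow> nat) \<times> (nat list set \<Rightarrow> real)"

text \<open>One step at time t with revealed point x; the label yt is used only after the
  prediction has been formed.
  State: running sums, running counts, (unnormalised) weights of the experts.\<close>
definition impl_step :: "nat \<Rightarrow> real \<Rightarrow> nat \<Rightarrow> nat list \<Rightarrow> real \<Rightarrow> om_state \<Rightarrow> real \<times> om_state \<times> nat" where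
  "impl_step k lam t x yt st =
     (case st of (sm, cn, wt) \<Rightarrow>
      let Rs = rects_containing k x;
          tr = (\<lambda>R. trunc lam (if cn R = 0 then 0 else sm R / real (cn R)));
          Act = (if t = 1 then Rs else filter (\<lambda>R. 0 < cn R) Rs);
          Z = sum_list (map wt Act);
          P = sum_list (map (\<lambda>R. wt R * tr R) Act);
          pred = P / Z;
          \<alpha> = 1 / (8 * lam\<^sup>2);
          v = (\<lambda>R. wt R * exp (- \<alpha> * (trunc lam yt - tr R)\<^sup>2));
          Z' = sum_list (map v Act);
          wt' = fold (\<lambda>R w. w(R := v R / Z' * Z)) Act wt;
          sm' = fold (\<lambda>R s. s(R := s R + yt)) Rs sm;
          cn' = fold (\<lambda>R c. c(R := c R + 1)) Rs cn;
          cost = length Rs              \<comment> \<open>enumerate the rectangles containing x\<close>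
               + 8 * length Rs          \<comment> \<open>expert predictions: lookups, test, division, truncation\<close>
               + 2 * length Rs          \<comment> \<open>activity test\<close>
               + 2 * length Act         \<comment> \<open>Z\<close>
               + 3 * length Act         \<comment> \<open>P\<close>
               + 1                      \<comment> \<open>pred\<close>
               + 4                      \<comment> \<open>alpha and truncation of yt\<close>
               + 8 * length Act         \<comment> \<open>v and Z'\<close>
               + 4 * length Act         \<comment> \<open>weight updates\<close>
               + 3 * length Rs          \<comment> \<open>sum updates\<close>
               + 3 * length Rs          \<comment> \<open>count updates\<close>
      in (pred, (sm', cn', wt'), cost))"

fun impl_run :: "nat \<Rightarrow> real \<Rightarrow> (nat \<Rightarrow> nat list) \<Rightarrow> (nat list \<Rightarrow> real) \<Rightarrow> nat \<Rightarrow> (nat \<Rightarrow> real) \<times> om_state \<times> nat" where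
  "impl_run k lam \<rho> y 0 = ((\<lambda>_. 0), ((\<lambda>_. 0), (\<lambda>_. 0), (\<lambda>_. 1)), 0)"
| "impl_run k lam \<rho> y (Suc t) =
     (case impl_run k lam \<rho> y t of (ps, st, c) \<Rightarrow>
        (case impl_step k lam (Suc t) (\<rho> (Suc t)) (y (\<rho> (Suc t))) st of (p, st', c') \<Rightarrow>
           (ps(Suc t := p), st', c + c')))"

end

theory Submission
  imports Defs
begin

text \<open>In each coordinate and at each level s \<le> k exactly one dyadic interval contains x_i,
  the one with index ceil(x_i / 2^s); so a point lies in exactly (k + 1)^d dyadic rectangles,
  and these are the only experts that OMADRE can activate or reweight at that time. The
  implementation keeps for every rectangle the running sum and count of the labels it has seen
  and its unnormalised weight. By induction on t, this state determines the expert predictions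
  and the weights of OMADRE, so the predictions agree; and each step touches only the
  (k + 1)^d rectangles containing the current point at constant cost, which gives
  O(N (k + 1)^d) = O(N (log_2 2n)^d) operations.\<close>

lemma dyadic_index_eq: "1 \<le> (xi::nat) \<Longrightarrow> (xi + 2 ^ s - 1) div 2 ^ s = (xi - 1) div 2 ^ s + 1"
  by (metis Nat.diff_add_assoc2 div_add_self2 power_not_zero zero_neq_numeral)

lemma dyadic_index_le:
  assumes "xi \<le> 2 ^ k" "s \<le> k"
  shows "(xi + 2 ^ s - 1) div 2 ^ s \<le> (2::nat) ^ (k - s)"
proof -
  have "(0::nat) < 2 ^ s" by simp
  then have "xi + 2 ^ s - 1 < 2 ^ k + 2 ^ s" using assms(1) by linarith
  also have "\<dots> = (2 ^ (k - s) + 1) * 2 ^ s"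
    using assms(2) by (simp add: algebra_simps power_add[symmetric])
  finally show ?thesis by (metis less_Suc_eq_le less_mult_imp_div_less Suc_eq_plus1)
qed

lemma mem_dy_int_iff:
  assumes "1 \<le> a"
  shows "xi \<in> dy_int s a \<longleftrightarrow> 1 \<le> xi \<and> a = (xi + 2 ^ s - 1) div 2 ^ s"
proof -
  have "xi \<in> dy_int s a \<longleftrightarrow> 1 \<le> xi \<and> 2 ^ s * (a - 1) \<le> xi - 1 \<and> xi - 1 < 2 ^ s * Suc (a - 1)"
    using assms unfolding dy_int_def by (cases a) (auto simp: algebra_simps)
  also have "\<dots> \<longleftrightarrow> 1 \<le> xi \<and> (xi - 1) div 2 ^ s = a - 1"
    by (metis div_nat_eqI power_not_zero split_div' times_div_less_eq_dividend zero_neq_numeral)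
  also have "\<dots> \<longleftrightarrow> 1 \<le> xi \<and> a = (xi + 2 ^ s - 1) div 2 ^ s"
    using assms dyadic_index_eq by auto
  finally show ?thesis .
qed

lemma dy_int_inj:
  assumes "dy_int s a = dy_int s' a'" "1 \<le> a" "1 \<le> a'"
  shows "s = s' \<and> a = a'"
proof -
  have card: "card (dy_int s a) = 2 ^ s" if "1 \<le> a" for s a
    using that unfolding dy_int_def by (cases a) auto
  have "s = s'" using card[of a s] card[of a' s'] assms by simp
  moreover have "a * 2 ^ s \<in> dy_int s a" "a * 2 ^ s \<in> dy_int s' a'"
    using assms unfolding dy_int_def by (auto intro: mult_strict_right_mono)
  ultimately show ?thesis using assms mem_dy_int_iff by metis
qed

definition dyadic_code :: "nat \<Rightarrow> nat \<Rightarrow> (nat \<times> nat) list \<Rightarrow> bool" where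
  "dyadic_code d k rs \<longleftrightarrow> length rs = d \<and>
      (\<forall>i<d. fst (rs ! i) \<le> k \<and> 1 \<le> snd (rs ! i) \<and> snd (rs ! i) \<le> 2 ^ (k - fst (rs ! i)))"

lemma dyadic_rects_eq_image: "dyadic_rects d k = rect_set ` Collect (dyadic_code d k)"
  unfolding dyadic_rects_def dyadic_code_def by blast

lemma finite_dyadic_rects: "finite (dyadic_rects d k)"
proof -
  have "Collect (dyadic_code d k) \<subseteq> {rs. set rs \<subseteq> {..k} \<times> {..2 ^ k} \<and> length rs = d}"
  proof (clarify, intro conjI subsetI)
    fix rs p assume rs: "dyadic_code d k rs" and "p \<in> set rs"
    then obtain i where "i < d" "p = rs ! i"
      unfolding dyadic_code_def by (auto simp: in_set_conv_nth)
    then have "fst p \<le> k" "snd p \<le> 2 ^ (k - fst p)" using rs unfolding dyadic_code_def by auto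
    moreover have "snd p \<le> 2 ^ k"
      using calculation(2) by (rule order_trans) simp
    ultimately show "p \<in> {..k} \<times> {..2 ^ k}" by (auto simp: mem_Times_iff)
  qed (simp add: dyadic_code_def)
  then have "finite (Collect (dyadic_code d k))"
    by (rule finite_subset) (simp add: finite_lists_length_eq)
  then show ?thesis unfolding dyadic_rects_eq_image by simp
qed

definition dyadic_codes_at :: "nat \<Rightarrow> nat \<Rightarrow> (nat \<times> nat) list" where
  "dyadic_codes_at k xi = map (\<lambda>s. (s, (xi + 2 ^ s - 1) div 2 ^ s)) [0..<k + 1]"

lemma rects_containing_eq: "rects_containing k x = map rect_set (product_lists (map (dyadic_codes_at k) x))"
  unfolding rects_containing_def dyadic_codes_at_def by simp

lemma grid_nth: "x \<in> grid d n \<Longrightarrow> i < d \<Longrightarrow> 1 \<le> x ! i \<and> x ! i \<le> n"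
  unfolding grid_def by auto

lemma mem_product_dyadic_codes_at_iff:
  assumes x: "x \<in> grid d (2 ^ k)"
  shows "rs \<in> set (product_lists (map (dyadic_codes_at k) x)) \<longleftrightarrow> dyadic_code d k rs \<and> x \<in> rect_set rs"
proof -
  have lx: "length x = d" using x unfolding grid_def by simp
  have codes: "p \<in> set (dyadic_codes_at k xi) \<longleftrightarrow> fst p \<le> k \<and> snd p = (xi + 2 ^ fst p - 1) div 2 ^ fst p"
    for p xi unfolding dyadic_codes_at_def by (cases p) (auto simp del: upt_Suc)
  have coord: "fst p \<le> k \<and> snd p = (x ! i + 2 ^ fst p - 1) div 2 ^ fst p \<longleftrightarrow>
      fst p \<le> k \<and> 1 \<le> snd p \<and> snd p \<le> 2 ^ (k - fst p) \<and> x ! i \<in> dy_int (fst p) (snd p)"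
    if "i < d" for i p
  proof -
    have xi: "1 \<le> x ! i" "x ! i \<le> 2 ^ k" using grid_nth[OF x that] by auto
    have "1 \<le> (x ! i + 2 ^ fst p - 1) div 2 ^ fst p"
      using dyadic_index_eq[OF xi(1)] by simp
    then show ?thesis
      using mem_dy_int_iff[of "snd p" "x ! i" "fst p"] dyadic_index_le[OF xi(2)] xi(1) by auto
  qed
  have "rs \<in> set (product_lists (map (dyadic_codes_at k) x)) \<longleftrightarrow>
      length rs = d \<and> (\<forall>i<d. fst (rs ! i) \<le> k \<and> snd (rs ! i) = (x ! i + 2 ^ fst (rs ! i) - 1) div 2 ^ fst (rs ! i))"
    unfolding product_lists_set list_all2_conv_all_nth by (auto simp: lx codes)
  also have "\<dots> \<longleftrightarrow> length rs = d \<and> (\<forall>i<d. fst (rs ! i) \<le> k \<and> 1 \<le> snd (rs ! i) \<and>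
      snd (rs ! i) \<le> 2 ^ (k - fst (rs ! i)) \<and> x ! i \<in> dy_int (fst (rs ! i)) (snd (rs ! i)))"
  proof -
    have "\<forall>i<d. (fst (rs ! i) \<le> k \<and> snd (rs ! i) = (x ! i + 2 ^ fst (rs ! i) - 1) div 2 ^ fst (rs ! i)
      \<longleftrightarrow> fst (rs ! i) \<le> k \<and> 1 \<le> snd (rs ! i) \<and> snd (rs ! i) \<le> 2 ^ (k - fst (rs ! i)) \<and>
          x ! i \<in> dy_int (fst (rs ! i)) (snd (rs ! i)))"
      by (intro allI impI coord)
    then show ?thesis by blast
  qed
  also have "\<dots> \<longleftrightarrow> dyadic_code d k rs \<and> x \<in> rect_set rs"
    unfolding dyadic_code_def rect_set_def mem_Collect_eq lx by blast
  finally show ?thesis .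
qed

lemma dy_int_subset_if_rect_set_subset:
  assumes x: "x \<in> rect_set rs" and sub: "rect_set rs \<subseteq> rect_set rs'" and i: "i < length rs"
  shows "dy_int (fst (rs ! i)) (snd (rs ! i)) \<subseteq> dy_int (fst (rs' ! i)) (snd (rs' ! i))"
proof
  fix z assume z: "z \<in> dy_int (fst (rs ! i)) (snd (rs ! i))"
  have "x[i := z] \<in> rect_set rs"
    using x z i unfolding rect_set_def by (simp add: nth_list_update)
  then have "x[i := z] \<in> rect_set rs'" using sub by blast
  moreover have "length x = length rs" using x unfolding rect_set_def by simp
  ultimately show "z \<in> dy_int (fst (rs' ! i)) (snd (rs' ! i))"
    using i unfolding rect_set_def by auto
qed

lemma inj_on_rect_set: "inj_on rect_set {rs. dyadic_code d k rs \<and> x \<in> rect_set rs}"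
proof (rule inj_onI, clarify)
  fix rs rs' assume rs: "dyadic_code d k rs" "x \<in> rect_set rs"
    and rs': "dyadic_code d k rs'" "x \<in> rect_set rs'" and eq: "rect_set rs = rect_set rs'"
  show "rs = rs'"
  proof (rule nth_equalityI)
    show "length rs = length rs'" using rs rs' unfolding dyadic_code_def by simp
    fix i assume i: "i < length rs"
    then have "dy_int (fst (rs ! i)) (snd (rs ! i)) = dy_int (fst (rs' ! i)) (snd (rs' ! i))"
      using dy_int_subset_if_rect_set_subset[OF rs(2)] dy_int_subset_if_rect_set_subset[OF rs'(2)]
        eq \<open>length rs = length rs'\<close> by (metis order.refl subset_antisym)
    moreover have "1 \<le> snd (rs ! i)" "1 \<le> snd (rs' ! i)"
      using rs rs' i unfolding dyadic_code_def by auto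
    ultimately show "rs ! i = rs' ! i" using dy_int_inj by (simp add: prod_eq_iff)
  qed
qed

lemma set_rects_containing:
  assumes "x \<in> grid d (2 ^ k)"
  shows "set (rects_containing k x) = {S \<in> dyadic_rects d k. x \<in> S}"
  unfolding rects_containing_eq dyadic_rects_eq_image
  using mem_product_dyadic_codes_at_iff[OF assms] by auto

lemma distinct_rects_containing:
  assumes "x \<in> grid d (2 ^ k)"
  shows "distinct (rects_containing k x)"
  unfolding rects_containing_eq distinct_map
proof
  show "distinct (product_lists (map (dyadic_codes_at k) x))"
    by (rule distinct_product_lists) (auto simp: dyadic_codes_at_def distinct_map inj_on_def simp del: upt_Suc)
  show "inj_on rect_set (set (product_lists (map (dyadic_codes_at k) x)))"
    using inj_on_rect_set by (rule inj_on_subset) (auto simp: mem_product_dyadic_codes_at_iff[OF assms])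
qed

lemma length_rects_containing: "length (rects_containing k x) = (k + 1) ^ length x"
proof -
  have "foldr (*) (map (\<lambda>_. k + 1) xs) 1 = (k + 1) ^ length xs" for xs :: "nat list"
    by (induction xs) auto
  then show ?thesis
    unfolding rects_containing_eq length_map length_product_lists by (simp add: dyadic_codes_at_def comp_def)
qed

lemma dyadic_rects_nonempty: "dyadic_rects d k \<noteq> {}"
proof -
  have "dyadic_code d k (replicate d (k, 1))" unfolding dyadic_code_def by simp
  then show ?thesis unfolding dyadic_rects_eq_image by blast
qed

lemma finite_prior: "finite (prior \<rho> t)"
  unfolding prior_def by simp

lemma prior_Suc: "1 \<le> t \<Longrightarrow> prior \<rho> (Suc t) = insert (\<rho> t) (prior \<rho> t)"
  unfolding prior_def by (simp add: atLeastLessThanSuc image_insert)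

lemma not_in_prior: "inj_on \<rho> {1..t} \<Longrightarrow> 1 \<le> t \<Longrightarrow> \<rho> t \<notin> prior \<rho> t"
  unfolding prior_def by (auto dest: inj_onD)

lemma active_subset: "active F \<rho> t \<subseteq> F"
  unfolding active_def by auto

definition running_mean ::
    "(nat list set \<Rightarrow> real) \<Rightarrow> (nat list set \<Rightarrow> nat) \<Rightarrow> nat list set \<Rightarrow> real" where
  "running_mean sm cn R = (if cn R = 0 then 0 else sm R / real (cn R))"

definition active_list ::
    "nat \<Rightarrow> nat \<Rightarrow> nat list \<Rightarrow> (nat list set \<Rightarrow> nat) \<Rightarrow> nat list set list" where
  "active_list k t x cn =
     (if t = 1 then rects_containing k x else filter (\<lambda>R. 0 < cn R) (rects_containing k x))"

definition reweighted ::
    "real \<Rightarrow> real \<Rightarrow> (nat list set \<Rightarrow> real) \<Rightarrow> (nat list set \<Rightarrow> nat) \<Rightarrow>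
      (nat list set \<Rightarrow> real) \<Rightarrow> nat list set \<Rightarrow> real" where
  "reweighted lam yt sm cn wt R =
     wt R * exp (- (1 / (8 * lam\<^sup>2)) * (trunc lam yt - trunc lam (running_mean sm cn R))\<^sup>2)"

lemma fold_fun_upd: "fold (\<lambda>R w. w(R := f R)) xs g = (\<lambda>R. if R \<in> set xs then f R else g R)"
  by (induction xs arbitrary: g) (auto simp: fun_eq_iff)

lemma fold_fun_upd_add:
  "distinct xs \<Longrightarrow> fold (\<lambda>R s. s(R := s R + c)) xs g = (\<lambda>R. if R \<in> set xs then g R + c else g R)"
  by (induction xs arbitrary: g) (auto simp: fun_eq_iff)

lemma impl_step_eq:
  assumes "distinct (rects_containing k x)"
  shows "impl_step k lam t x yt (sm, cn, wt) =
    (let Rs = rects_containing k x; Act = active_list k t x cn; v = reweighted lam yt sm cn wt in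
     (sum_list (map (\<lambda>R. wt R * trunc lam (running_mean sm cn R)) Act) / sum_list (map wt Act),
      ((\<lambda>R. if R \<in> set Rs then sm R + yt else sm R),
       (\<lambda>R. if R \<in> set Rs then cn R + 1 else cn R),
       (\<lambda>R. if R \<in> set Act then v R / sum_list (map v Act) * sum_list (map wt Act) else wt R)),
      17 * length Rs + 17 * length Act + 5))"
  unfolding impl_step_def Let_def prod.case active_list_def reweighted_def running_mean_def
    fold_fun_upd fold_fun_upd_add[OF assms]
  by simp

lemma impl_step_cost_le:
  "snd (snd (impl_step k lam t x yt st)) \<le> 34 * length (rects_containing k x) + 5"
proof -
  obtain sm cn wt where st: "st = (sm, cn, wt)" by (cases st)
  have "length (active_list k t x cn) \<le> length (rects_containing k x)"
    unfolding active_list_def by auto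
  then show ?thesis
    unfolding impl_step_def st prod.case Let_def snd_conv active_list_def[symmetric] by simp
qed

lemma impl_run_cost_le:
  assumes "\<forall>j\<in>{1..t}. length (\<rho> j) = d"
  shows "snd (snd (impl_run k lam \<rho> y t)) \<le> t * (34 * (k + 1) ^ d + 5)"
  using assms
proof (induction t)
  case (Suc t)
  obtain ps st c where run: "impl_run k lam \<rho> y t = (ps, st, c)" by (metis prod_cases3)
  have "length (rects_containing k (\<rho> (Suc t))) = (k + 1) ^ d"
    using Suc.prems by (simp add: length_rects_containing)
  then have "snd (snd (impl_step k lam (Suc t) (\<rho> (Suc t)) (y (\<rho> (Suc t))) st)) \<le> 34 * (k + 1) ^ d + 5"
    using impl_step_cost_le by metis
  moreover have "c \<le> t * (34 * (k + 1) ^ d + 5)" using Suc run by simp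
  moreover have "snd (snd (impl_run k lam \<rho> y (Suc t))) =
      c + snd (snd (impl_step k lam (Suc t) (\<rho> (Suc t)) (y (\<rho> (Suc t))) st))"
    by (simp add: run split: prod.split)
  ultimately show ?case by simp
qed simp

text \<open>Here prior \<rho> (Suc t) consists of the first t points. The implementation starts from weight 1
  instead of 1 / card F, and OMADRE's update is invariant under rescaling all weights, hence the
  factor card F.\<close>
definition om_state_inv ::
    "nat list set set \<Rightarrow> (nat \<Rightarrow> nat list) \<Rightarrow> (nat list \<Rightarrow> real) \<Rightarrow> real \<Rightarrow> nat \<Rightarrow> om_state \<Rightarrow> bool"
  where
  "om_state_inv F \<rho> y lam t st \<longleftrightarrow> (case st of (sm, cn, wt) \<Rightarrow>
     (\<forall>R\<in>F. sm R = (\<Sum>u\<in>prior \<rho> (Suc t) \<inter> R. y u) \<and>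
        cn R = card (prior \<rho> (Suc t) \<inter> R)) \<and>
     (\<forall>S. wt S = real (card F) * omw F \<rho> y lam t S))"

context
  fixes F :: "nat list set set" and \<rho> :: "nat \<Rightarrow> nat list" and y :: "nat list \<Rightarrow> real"
    and lam :: real and k t :: nat and sm :: "nat list set \<Rightarrow> real" and cn :: "nat list set \<Rightarrow> nat"
    and wt :: "nat list set \<Rightarrow> real"
  assumes finite_F: "finite F" and F_nonempty: "F \<noteq> {}"
    and set_rects: "set (rects_containing k (\<rho> (Suc t))) = {S \<in> F. \<rho> (Suc t) \<in> S}"
    and distinct_rects: "distinct (rects_containing k (\<rho> (Suc t)))"
    and inv: "om_state_inv F \<rho> y lam t (sm, cn, wt)"
begin

lemma running_mean_eq_expert_pred: "R \<in> F \<Longrightarrow> running_mean sm cn R = expert_pred \<rho> y R (Suc t)"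
  using inv finite_prior[of \<rho> "Suc t"]
  by (auto simp: om_state_inv_def running_mean_def expert_pred_def mean_def Int_commute)

lemma set_active_list: "set (active_list k (Suc t) (\<rho> (Suc t)) cn) = active F \<rho> (Suc t)"
proof -
  have "0 < cn R \<longleftrightarrow> prior \<rho> (Suc t) \<inter> R \<noteq> {}" if "R \<in> F" for R
    using inv that finite_prior[of \<rho> "Suc t"] by (auto simp: om_state_inv_def card_gt_0_iff)
  then show ?thesis using set_rects unfolding active_list_def active_def by auto
qed

lemma sum_list_active_list:
  "sum_list (map f (active_list k (Suc t) (\<rho> (Suc t)) cn)) = (\<Sum>S\<in>active F \<rho> (Suc t). f S)"
proof -
  have "distinct (if b then xs else filter P xs)" if "distinct xs" for b xs P
    using that by simp
  then have "distinct (active_list k (Suc t) (\<rho> (Suc t)) cn)"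
    using distinct_rects unfolding active_list_def by blast
  then show ?thesis by (simp add: sum_list_distinct_conv_sum_set set_active_list)
qed

lemma impl_step_prediction:
  "fst (impl_step k lam (Suc t) (\<rho> (Suc t)) yt (sm, cn, wt)) = om_pred F \<rho> y lam (Suc t)"
proof -
  define A where "A = active F \<rho> (Suc t)"
  define w where "w = omw F \<rho> y lam t"
  define E where "E S = trunc lam (expert_pred \<rho> y S (Suc t))" for S
  have cF: "real (card F) \<noteq> 0" using finite_F F_nonempty by simp
  have wt: "wt S = real (card F) * w S" for S using inv unfolding om_state_inv_def w_def by simp
  have "sum_list (map (\<lambda>R. wt R * trunc lam (running_mean sm cn R)) (active_list k (Suc t) (\<rho> (Suc t)) cn))
      = (\<Sum>S\<in>A. real (card F) * (w S * E S))"
    unfolding sum_list_active_list A_def E_def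
    using active_subset[of F \<rho> "Suc t"] running_mean_eq_expert_pred
    by (intro sum.cong) (auto simp: wt)
  also have "\<dots> = real (card F) * (\<Sum>S\<in>A. w S * E S)"
    by (simp add: sum_distrib_left)
  moreover have "sum_list (map wt (active_list k (Suc t) (\<rho> (Suc t)) cn)) = real (card F) * (\<Sum>S\<in>A. w S)"
    by (simp add: sum_list_active_list A_def wt sum_distrib_left)
  moreover have "om_pred F \<rho> y lam (Suc t) = (\<Sum>S\<in>A. w S * E S) / (\<Sum>S\<in>A. w S)"
    unfolding om_pred_def A_def w_def E_def Let_def by (simp add: sum_divide_distrib)
  ultimately show ?thesis using cF by (simp add: impl_step_eq[OF distinct_rects] Let_def)
qed

lemma impl_step_state_inv:
  assumes fresh: "\<rho> (Suc t) \<notin> prior \<rho> (Suc t)"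
  shows "om_state_inv F \<rho> y lam (Suc t)
    (fst (snd (impl_step k lam (Suc t) (\<rho> (Suc t)) (y (\<rho> (Suc t))) (sm, cn, wt))))"
proof -
  define x where "x = \<rho> (Suc t)"
  define A where "A = active F \<rho> (Suc t)"
  define w where "w = omw F \<rho> y lam t"
  define ee where "ee S = exp (- (1 / (8 * lam\<^sup>2)) * loss lam \<rho> y S (Suc t))" for S
  define cF where "cF = real (card F)"
  have cF: "cF \<noteq> 0" using finite_F F_nonempty unfolding cF_def by simp
  have wt: "wt S = cF * w S" for S using inv unfolding om_state_inv_def w_def cF_def by simp
  have v: "reweighted lam (y x) sm cn wt S = cF * (w S * ee S)" if "S \<in> A" for S
    using that active_subset[of F \<rho> "Suc t"] running_mean_eq_expert_pred
    unfolding reweighted_def ee_def loss_def A_def x_def by (auto simp: wt)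
  have prior_next: "prior \<rho> (Suc (Suc t)) = insert x (prior \<rho> (Suc t))"
    unfolding x_def by (rule prior_Suc) simp
  have counts: "sm' R = (\<Sum>u\<in>prior \<rho> (Suc (Suc t)) \<inter> R. y u) \<and>
      cn' R = card (prior \<rho> (Suc (Suc t)) \<inter> R)"
    if "R \<in> F" "sm' = (\<lambda>R. if R \<in> set (rects_containing k x) then sm R + y x else sm R)"
      "cn' = (\<lambda>R. if R \<in> set (rects_containing k x) then cn R + 1 else cn R)" for R sm' cn'
    using inv that fresh finite_prior[of \<rho> "Suc t"]
    by (cases "x \<in> R") (auto simp: om_state_inv_def prior_next set_rects x_def)
  have weights: "wt' S = cF * omw F \<rho> y lam (Suc t) S"
    if "wt' = (\<lambda>R. if R \<in> set (active_list k (Suc t) x cn)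
        then reweighted lam (y x) sm cn wt R / sum_list (map (reweighted lam (y x) sm cn wt) (active_list k (Suc t) x cn))
          * sum_list (map wt (active_list k (Suc t) x cn)) else wt R)" for S wt'
  proof -
    have "omw F \<rho> y lam (Suc t) S =
        (if S \<in> A then w S * ee S / (\<Sum>S'\<in>A. w S' * ee S') * (\<Sum>S'\<in>A. w S') else w S)"
      unfolding w_def A_def ee_def by (simp add: Let_def)
    moreover have "(cF * a) / (cF * b) * (cF * c) = cF * (a / b * c)" for a b c
      using cF by (cases "b = 0") (simp_all add: field_simps)
    ultimately show ?thesis
      using that v unfolding x_def A_def
      by (simp add: set_active_list sum_list_active_list wt sum_distrib_left[symmetric] cong: sum.cong)
  qed
  show ?thesis
    using counts weights unfolding om_state_inv_def cF_def x_def[symmetric]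
    by (simp add: impl_step_eq[OF distinct_rects[folded x_def]] Let_def)
qed

end

lemma om_state_inv_init:
  "finite F \<Longrightarrow> F \<noteq> {} \<Longrightarrow> om_state_inv F \<rho> y lam 0 ((\<lambda>_. 0), (\<lambda>_. 0), (\<lambda>_. 1))"
  unfolding om_state_inv_def prior_def by simp

lemma impl_run_correct:
  assumes "inj_on \<rho> {1..t}" and "\<rho> ` {1..t} \<subseteq> grid d (2 ^ k)"
  shows "(\<forall>j\<in>{1..t}. fst (impl_run k lam \<rho> y t) j = om_pred (dyadic_rects d k) \<rho> y lam j) \<and>
    om_state_inv (dyadic_rects d k) \<rho> y lam t (fst (snd (impl_run k lam \<rho> y t)))"
  using assms
proof (induction t)
  case 0
  show ?case by (simp add: om_state_inv_init finite_dyadic_rects dyadic_rects_nonempty)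
next
  case (Suc t)
  obtain ps sm cn wt c where run: "impl_run k lam \<rho> y t = (ps, (sm, cn, wt), c)"
    by (metis prod_cases3)
  have "inj_on \<rho> {1..t}" using Suc.prems(1) by (rule inj_on_subset) auto
  moreover have "\<rho> ` {1..t} \<subseteq> grid d (2 ^ k)" using Suc.prems(2) by auto
  ultimately have IH: "\<forall>j\<in>{1..t}. ps j = om_pred (dyadic_rects d k) \<rho> y lam j"
    "om_state_inv (dyadic_rects d k) \<rho> y lam t (sm, cn, wt)"
    using Suc.IH by (simp_all add: run)
  have x: "\<rho> (Suc t) \<in> grid d (2 ^ k)" using Suc.prems(2) by auto
  have fresh: "\<rho> (Suc t) \<notin> prior \<rho> (Suc t)"
    using Suc.prems(1) by (rule not_in_prior) simp
  note step_facts = finite_dyadic_rects dyadic_rects_nonempty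
    set_rects_containing[OF x] distinct_rects_containing[OF x] IH(2)
  obtain p st' c' where step:
    "impl_step k lam (Suc t) (\<rho> (Suc t)) (y (\<rho> (Suc t))) (sm, cn, wt) = (p, st', c')"
    by (metis prod_cases3)
  have "p = om_pred (dyadic_rects d k) \<rho> y lam (Suc t)"
    using impl_step_prediction[OF step_facts, of "y (\<rho> (Suc t))"] step by simp
  moreover have "om_state_inv (dyadic_rects d k) \<rho> y lam (Suc t) st'"
    using impl_step_state_inv[OF step_facts fresh] step by simp
  ultimately show ?case using IH(1) by (auto simp: run step)
qed

lemma log2_two_pow: "log 2 (2 * real (2 ^ k :: nat)) = real (k + 1)"
proof -
  have "log 2 (2 * real (2 ^ k :: nat)) = log 2 (2 ^ (k + 1))" by simp
  also have "\<dots> = real (k + 1)" by (rule log_pow_cancel) simp_all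
  finally show ?thesis .
qed

lemma impl_run_cost_le_log:
  assumes "\<forall>j\<in>{1..t}. length (\<rho> j) = d"
  shows "real (snd (snd (impl_run k lam \<rho> y t))) \<le> 39 * real t * (log 2 (2 * real (2 ^ k :: nat))) ^ d"
proof -
  have "snd (snd (impl_run k lam \<rho> y t)) \<le> t * (34 * (k + 1) ^ d + 5)"
    using assms by (rule impl_run_cost_le)
  also have "\<dots> \<le> 39 * t * (k + 1) ^ d"
  proof -
    have "5 * t \<le> 5 * t * (k + 1) ^ d" by simp
    then show ?thesis by (simp add: algebra_simps)
  qed
  finally have "real (snd (snd (impl_run k lam \<rho> y t))) \<le> real (39 * t * (k + 1) ^ d)"
    by (simp only: of_nat_le_iff)
  then show ?thesis unfolding log2_two_pow by simp
qed

theorem mainTheorem3: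
  shows "\<exists>C::real. C > 0 \<and>
    (\<forall>(d::nat) (k::nat) (\<rho>::nat \<Rightarrow> nat list) (y::nat list \<Rightarrow> real) (lam::real).
       d \<ge> 1 \<longrightarrow> bij_betw \<rho> {1..(2 ^ k) ^ d} (grid d (2 ^ k)) \<longrightarrow>
       (let N = (2 ^ k) ^ d; (ps, st, c) = impl_run k lam \<rho> y N in
          (\<forall>t\<in>{1..N}. ps t = om_pred (dyadic_rects d k) \<rho> y lam t) \<and>
          real c \<le> C * real N * (log 2 (2 * real (2 ^ k :: nat))) ^ d))"
proof (intro exI[of _ 39] conjI allI impI)
  fix d k :: nat and \<rho> :: "nat \<Rightarrow> nat list" and y :: "nat list \<Rightarrow> real" and lam :: real
  assume bij: "bij_betw \<rho> {1..(2 ^ k) ^ d} (grid d (2 ^ k))"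
  define N :: nat where "N = (2 ^ k) ^ d"
  obtain ps st c where run: "impl_run k lam \<rho> y N = (ps, st, c)" by (metis prod_cases3)
  have preds: "\<forall>t\<in>{1..N}. ps t = om_pred (dyadic_rects d k) \<rho> y lam t"
    using impl_run_correct[where \<rho> = \<rho> and t = N and d = d and k = k and lam = lam and y = y]
      bij run unfolding N_def bij_betw_def by simp
  have "\<forall>j\<in>{1..N}. length (\<rho> j) = d"
    using bij unfolding N_def bij_betw_def grid_def by auto
  then have "real c \<le> 39 * real N * (log 2 (2 * real (2 ^ k :: nat))) ^ d"
    using impl_run_cost_le_log[of N \<rho> d k lam y] run by simp
  then show "let N = (2 ^ k) ^ d; (ps, st, c) = impl_run k lam \<rho> y N in
      (\<forall>t\<in>{1..N}. ps t = om_pred (dyadic_rects d k) \<rho> y lam t) \<and>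
      real c \<le> 39 * real N * (log 2 (2 * real (2 ^ k :: nat))) ^ d"
    using preds unfolding Let_def N_def[symmetric] run by simp
qed simp

end
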